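(* Let $\mu$ be a translation invariant probability measure on $X=\{0,1\}^{\mathbb{Z}}$ with finite total entropy $S(\mu)=\lim_{j\to\infty}S(\pi_j\mu)<\infty$. Then $\mu$ is a PC measure, i.e. $\mu$ is supported on the (countable) set of periodic configurations.
   Context: $\pi_j\mu$ is the marginal of $\mu$ on the coordinates $0,\ldots,j$, and $S(\nu)=-\sum_q\nu(q)\log\nu(q)$ is the Gibbs–Shannon entropy of a measure on a finite set; the limit defining the total entropy exists since $S(\pi_j\mu)$ is nondecreasing in $j$. *)

theory Defs
  imports "HOL-Probability.Probability"
begin

definition config_space :: "(int \<Rightarrow> bool) measure" where
  "config_space = PiM UNIV (\<lambda>_. count_space UNIV)"

definition shift :: "(int \<Rightarrow> bool) \<Rightarrow> (int \<Rightarrow> bool)" where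
  "shift x = (\<lambda>n. x (n + 1))"

definition cylinder :: "bool list \<Rightarrow> (int \<Rightarrow> bool) set" where
  "cylinder q = {x. \<forall>i < length q. x (int i) = q ! i}"

text \<open>Marginal of mu on coordinates 0..j: a measure on the finite set of
patterns of length j+1.\<close>
definition marginal :: "(int \<Rightarrow> bool) measure \<Rightarrow> nat \<Rightarrow> bool list \<Rightarrow> real" where
  "marginal M j q = measure M (cylinder q)"

definition block_entropy :: "(int \<Rightarrow> bool) measure \<Rightarrow> nat \<Rightarrow> real" where
  "block_entropy M j =
     - (\<Sum>q \<in> {q :: bool list. length q = Suc j}.
          (if marginal M j q = 0 then 0 else marginal M j q * ln (marginal M j q)))"

definition periodic_config :: "(int \<Rightarrow> bool) \<Rightarrow> bool" where
  "periodic_config x \<longleftrightarrow> (\<exists>p::int > 0. \<forall>n. x (n + p) = x n)"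

end

theory Submission
  imports Defs
begin

text \<open>Let K bound the block entropies and d = exp (-t). A Markov-type bound on the entropy shows
  that the central windows of radius n of mass at most d carry total mass at most K/t. So the
  points all of whose windows have mass above d form a set of measure at least 1 - K/t; this
  set is finite, since any N of its points are separated by a single window radius, and N
  disjoint sets of mass above d force N d \<le> 1. A finite set is carried by its atoms, and an
  atom of a shift-invariant probability measure is periodic: its shift orbit consists of atoms
  of equal mass, hence is finite. Letting t \<rightarrow> \<infinity> gives full measure to the periodic configurations.\<close>

lemma (in prob_space) card_mult_le_one_if_disjoint:
  assumes "finite I" "disjoint_family_on A I" "A ` I \<subseteq> sets M"
    and "\<And>i. i \<in> I \<Longrightarrow> d \<le> measure M (A i)"
  shows "real (card I) * d \<le> 1"
proof -
  have "real (card I) * d \<le> (\<Sum>i\<in>I. measure M (A i))"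
    using sum_mono[of I "\<lambda>_. d"] assms(4) by simp
  also have "\<dots> = measure M (\<Union>i\<in>I. A i)"
    using finite_measure_finite_Union[OF assms(1,3,2)] by simp
  also have "\<dots> \<le> 1"
    by (rule prob_le_1)
  finally show ?thesis .
qed

lemma measurable_funpow: "T \<in> M \<rightarrow>\<^sub>M M \<Longrightarrow> T ^^ k \<in> M \<rightarrow>\<^sub>M M"
  by (induction k) (simp_all add: measurable_ident measurable_comp[where N=M])

lemma distr_funpow_eq:
  assumes T: "T \<in> M \<rightarrow>\<^sub>M M" "distr M M T = M"
  shows "distr M M (T ^^ k) = M"
proof (induction k)
  case (Suc k)
  have "distr M M (T ^^ Suc k) = distr (distr M M T) M (T ^^ k)"
    unfolding funpow_Suc_right
    by (rule distr_distr[symmetric]) (use T measurable_funpow in auto)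
  also have "\<dots> = M"
    using T(2) Suc.IH by simp
  finally show ?case .
qed (simp add: distr_id[unfolded id_def[symmetric]])

lemma (in prob_space) atom_of_invariant_injection_periodic:
  assumes T: "T \<in> M \<rightarrow>\<^sub>M M" "distr M M T = M" "inj T"
    and singletons: "\<And>y. y \<in> space M \<Longrightarrow> {y} \<in> sets M"
    and atom: "0 < measure M {x}"
  shows "\<exists>p>0. (T ^^ p) x = x"
proof -
  have x: "x \<in> space M"
    using atom measure_notin_sets sets.sets_into_space by fastforce
  have orbit_atom: "measure M {(T ^^ k) x} = measure M {x}" for k
  proof -
    have Tk: "T ^^ k \<in> M \<rightarrow>\<^sub>M M"
      using T(1) by (rule measurable_funpow)
    have "(T ^^ k) -` {(T ^^ k) x} \<inter> space M = {x}"
      using injD[OF inj_fn[OF T(3)]] x by auto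
    then show ?thesis
      using measure_distr[OF Tk, of "{(T ^^ k) x}"] distr_funpow_eq[OF T(1,2)]
        singletons measurable_space[OF Tk x] by simp
  qed
  obtain N :: nat where N: "1 < real N * measure M {x}"
    using ex_less_of_nat_mult atom by blast
  have "\<not> inj_on (\<lambda>k. (T ^^ k) x) {..<N}"
  proof
    assume "inj_on (\<lambda>k. (T ^^ k) x) {..<N}"
    then have "real (card {..<N}) * measure M {x} \<le> 1"
      using orbit_atom singletons measurable_space[OF measurable_funpow[OF T(1)] x]
      by (intro card_mult_le_one_if_disjoint[where A="\<lambda>k. {(T ^^ k) x}"])
         (auto simp: disjoint_family_on_def inj_on_def)
    with N show False by simp
  qed
  then obtain i j where "i \<noteq> j" "(T ^^ i) x = (T ^^ j) x"
    unfolding inj_on_def by blast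
  then obtain i j where ij: "i < j" "(T ^^ i) x = (T ^^ j) x"
    by (metis linorder_neqE_nat)
  have "T ^^ j = T ^^ i \<circ> T ^^ (j - i)"
    using ij(1) by (simp flip: funpow_add)
  then have "(T ^^ i) ((T ^^ (j - i)) x) = (T ^^ i) x"
    using ij(2) by simp
  then have "(T ^^ (j - i)) x = x"
    using injD[OF inj_fn[OF T(3)]] by blast
  with ij show ?thesis
    by (intro exI[of _ "j - i"]) simp
qed

lemma light_mass_le_entropy:
  fixes p :: "'a \<Rightarrow> real"
  assumes "finite Q" "\<And>q. q \<in> Q \<Longrightarrow> 0 \<le> p q" "\<And>q. q \<in> Q \<Longrightarrow> p q \<le> 1" "0 < d"
  shows "(\<Sum>q\<in>{q\<in>Q. p q \<le> d}. p q) * - ln d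
           \<le> - (\<Sum>q\<in>Q. if p q = 0 then 0 else p q * ln (p q))"
proof -
  define h where "h q = - (if p q = 0 then 0 else p q * ln (p q))" for q
  have "(\<Sum>q\<in>{q\<in>Q. p q \<le> d}. p q) * - ln d = (\<Sum>q\<in>{q\<in>Q. p q \<le> d}. p q * - ln d)"
    by (rule sum_distrib_right)
  also have "\<dots> \<le> (\<Sum>q\<in>{q\<in>Q. p q \<le> d}. h q)"
  proof (rule sum_mono)
    fix q assume q: "q \<in> {q\<in>Q. p q \<le> d}"
    show "p q * - ln d \<le> h q"
    proof (cases "p q = 0")
      case False
      then have "0 < p q" using q assms(2) by force
      then have "ln (p q) \<le> ln d" using q assms(4) by simp
      then show ?thesis using q assms(2) by (simp add: h_def mult_left_mono)
    qed (simp add: h_def)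
  qed
  also have "\<dots> \<le> (\<Sum>q\<in>Q. h q)"
  proof (rule sum_mono2[OF assms(1)])
    fix q assume "q \<in> Q - {q\<in>Q. p q \<le> d}"
    then have q: "q \<in> Q" by simp
    show "0 \<le> h q"
    proof (cases "p q = 0")
      case False
      then have "0 < p q" using q assms(2) by force
      then show ?thesis using q assms(3) by (simp add: h_def mult_nonneg_nonpos)
    qed (simp add: h_def)
  qed auto
  finally show ?thesis by (simp add: h_def sum_negf)
qed

section \<open>The configuration space\<close>

lemma space_config_space: "space config_space = UNIV"
  by (simp add: config_space_def space_PiM)

lemma measurable_coordinate: "(\<lambda>x. x i) \<in> config_space \<rightarrow>\<^sub>M count_space UNIV"
  unfolding config_space_def by (rule measurable_component_singleton) simp

lemma sets_coordinate_eq: "{x. x i = b} \<in> sets config_space"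
proof -
  from measurable_sets[OF measurable_coordinate, of "{b}"] show ?thesis
    by (simp add: space_config_space vimage_def)
qed

lemma singleton_sets_config_space: "{x} \<in> sets config_space"
proof -
  have "{x} = (\<Inter>i. {y. y i = x i})"
    by auto
  also have "\<dots> \<in> sets config_space"
    using sets.top[of config_space]
    by (intro sets.countable_INT'') (auto simp: sets_coordinate_eq space_config_space)
  finally show ?thesis .
qed

lemma sets_periodic_config: "{x. periodic_config x} \<in> sets config_space"
proof -
  have "{x. x a = x b} = ({x. x a} \<inter> {x. x b}) \<union> ({x. x a = False} \<inter> {x. x b = False})"
    for a b :: int by auto
  then have "{x. x a = x b} \<in> sets config_space" for a b :: int
    using sets_coordinate_eq[of _ True] sets_coordinate_eq[of _ False] by auto
  moreover have "{x. periodic_config x} = (\<Union>p\<in>{p::int. p > 0}. \<Inter>n. {x. x (n + p) = x n})"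
    by (auto simp: periodic_config_def)
  ultimately show ?thesis
    by (auto intro!: sets.countable_UN'' sets.countable_INT'' simp: space_config_space)
qed

lemma measurable_shift: "shift \<in> config_space \<rightarrow>\<^sub>M config_space"
proof -
  have "(\<lambda>x i. x (i + 1)) \<in> config_space \<rightarrow>\<^sub>M PiM UNIV (\<lambda>_. count_space UNIV)"
    by (rule measurable_PiM_single')
       (auto simp: space_config_space intro: measurable_coordinate)
  then show ?thesis by (simp add: shift_def[abs_def] config_space_def)
qed

lemma inj_shift: "inj shift"
proof (rule injI, rule ext)
  fix x y :: "int \<Rightarrow> bool" and n assume "shift x = shift y"
  then have "shift x (n - 1) = shift y (n - 1)" by simp
  then show "x n = y n" by (simp add: shift_def)
qed

lemma funpow_shift_apply: "(shift ^^ k) x n = x (n + int k)"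
  by (induction k arbitrary: n) (simp_all add: shift_def algebra_simps)

lemma periodic_config_if_funpow_shift_fixed:
  "0 < k \<Longrightarrow> (shift ^^ k) x = x \<Longrightarrow> periodic_config x"
  unfolding periodic_config_def by (metis funpow_shift_apply of_nat_0_less_iff)

section \<open>Central windows\<close>

text \<open>\<open>window n x\<close> lists x(-n), ..., x(n); shifting by n turns its cylinders into the
  cylinders over the coordinates 0, ..., 2n used by \<open>marginal\<close>.\<close>

definition window :: "nat \<Rightarrow> (int \<Rightarrow> bool) \<Rightarrow> bool list" where
  "window n x = map (\<lambda>i. x (int i - int n)) [0..<Suc (2 * n)]"

definition window_cylinder :: "nat \<Rightarrow> bool list \<Rightarrow> (int \<Rightarrow> bool) set" where
  "window_cylinder n q = {x. window n x = q}"

lemma length_window [simp]: "length (window n x) = Suc (2 * n)"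
  by (simp add: window_def)

lemma window_eq_iff:
  "window n y = window n x \<longleftrightarrow> (\<forall>i. - int n \<le> i \<and> i \<le> int n \<longrightarrow> y i = x i)"
proof
  assume h: "window n y = window n x"
  show "\<forall>i. - int n \<le> i \<and> i \<le> int n \<longrightarrow> y i = x i"
  proof (intro allI impI)
    fix i :: int assume i: "- int n \<le> i \<and> i \<le> int n"
    define j where "j = nat (i + int n)"
    have j: "j < Suc (2 * n)" "int j - int n = i"
      using i by (auto simp: j_def)
    have "window n y ! j = window n x ! j"
      using h by simp
    then show "y i = x i"
      using j by (simp add: window_def del: upt_Suc)
  qed
next
  assume "\<forall>i. - int n \<le> i \<and> i \<le> int n \<longrightarrow> y i = x i"
  then show "window n y = window n x"
    unfolding window_def by (intro map_cong) auto
qed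

lemma window_cylinder_Suc_subset:
  "window_cylinder (Suc n) (window (Suc n) x) \<subseteq> window_cylinder n (window n x)"
  by (auto simp: window_cylinder_def window_eq_iff)

lemma eventually_inj_on_window:
  assumes "finite F"
  shows "eventually (\<lambda>n. inj_on (window n) F) sequentially"
proof -
  have "eventually (\<lambda>n. window n x \<noteq> window n y) sequentially" if "x \<noteq> y" for x y
  proof -
    obtain i where "x i \<noteq> y i"
      using \<open>x \<noteq> y\<close> by auto
    then have "window n x \<noteq> window n y" if "nat \<bar>i\<bar> \<le> n" for n
    proof -
      have "- int n \<le> i \<and> i \<le> int n"
        using that by auto
      with \<open>x i \<noteq> y i\<close> show ?thesis
        unfolding window_eq_iff by auto
    qed
    then show ?thesis
      unfolding eventually_sequentially by blast
  qed
  then have "eventually (\<lambda>n. \<forall>(x, y) \<in> F \<times> F. x \<noteq> y \<longrightarrow> window n x \<noteq> window n y) sequentially"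
    using assms by (intro eventually_ball_finite) auto
  then show ?thesis
    by (rule eventually_mono) (auto simp: inj_on_def)
qed

lemma sets_window_cylinder: "window_cylinder n q \<in> sets config_space"
proof (cases "length q = Suc (2 * n)")
  case True
  then have "window_cylinder n q = (\<Inter>i<Suc (2 * n). {x. x (int i - int n) = q ! i})"
    by (auto simp: window_cylinder_def window_def list_eq_iff_nth_eq simp del: upt_Suc)
  also have "\<dots> \<in> sets config_space"
    by (intro sets.finite_INT) (auto intro: sets_coordinate_eq)
  finally show ?thesis .
next
  case False
  then have "window_cylinder n q = {}"
    by (auto simp: window_cylinder_def)
  then show ?thesis by simp
qed

lemma vimage_window_sets: "window n -` S \<in> sets config_space"
proof -
  have "window n -` S = (\<Union>q\<in>S. window_cylinder n q)"
    by (auto simp: window_cylinder_def)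
  also have "\<dots> \<in> sets config_space"
    by (intro sets.countable_UN'') (auto intro: sets_window_cylinder)
  finally show ?thesis .
qed

lemma vimage_funpow_shift_window_cylinder:
  "length q = Suc (2 * n) \<Longrightarrow> (shift ^^ n) -` window_cylinder n q = cylinder q"
  by (auto simp: funpow_shift_apply window_cylinder_def window_def cylinder_def
      list_eq_iff_nth_eq simp del: upt_Suc)

section \<open>Shift-invariant measures\<close>

locale shift_invariant = prob_space M for M :: "(int \<Rightarrow> bool) measure" +
  assumes sets_eq: "sets M = sets config_space"
    and distr_shift: "distr M M shift = M"
begin

lemma space_eq: "space M = UNIV"
  using sets_eq_imp_space_eq[OF sets_eq] space_config_space by simp

lemma measurable_shift_M: "shift \<in> M \<rightarrow>\<^sub>M M"
  using measurable_shift measurable_cong_sets[OF sets_eq sets_eq] by simp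

lemma measure_window_cylinder:
  assumes "length q = Suc (2 * n)"
  shows "measure M (window_cylinder n q) = marginal M (2 * n) q"
proof -
  have "measure M (window_cylinder n q) = measure (distr M M (shift ^^ n)) (window_cylinder n q)"
    using distr_funpow_eq[OF measurable_shift_M distr_shift] by simp
  also have "\<dots> = measure M (cylinder q)"
    using measure_distr[OF measurable_funpow[OF measurable_shift_M]] sets_window_cylinder
      vimage_funpow_shift_window_cylinder[OF assms] sets_eq space_eq by simp
  finally show ?thesis
    by (simp add: marginal_def)
qed

lemma periodic_if_atom: "0 < measure M {x} \<Longrightarrow> periodic_config x"
  using atom_of_invariant_injection_periodic[OF measurable_shift_M distr_shift inj_shift]
    singleton_sets_config_space sets_eq periodic_config_if_funpow_shift_fixed by blast

lemma finite_measure_le_periodic: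
  assumes "finite A"
  shows "measure M A \<le> measure M {x. periodic_config x}"
proof -
  let ?P = "{x. periodic_config x}"
  have P: "?P \<in> sets M"
    using sets_periodic_config sets_eq by simp
  have "{x} \<in> null_sets M" if "x \<in> A - ?P" for x
  proof -
    have "\<not> 0 < measure M {x}"
      using that periodic_if_atom by blast
    then have "measure M {x} = 0"
      using measure_nonneg[of M "{x}"] by linarith
    then show ?thesis
      using singleton_sets_config_space[of x] sets_eq
      by (intro null_setsI) (simp_all add: emeasure_eq_measure)
  qed
  then have "(\<Union>x\<in>A - ?P. {x}) \<in> null_sets M"
    using assms by (intro null_sets_UN') (auto intro: countable_finite)
  then have null: "A - ?P \<in> null_sets M"
    by simp
  have "measure M A \<le> measure M (?P \<union> (A - ?P))"
    using sets.Un[OF P null_setsD2[OF null]] by (intro finite_measure_mono) auto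
  also have "\<dots> = measure M ?P"
    using P null by (rule measure_Un_null_set)
  finally show ?thesis .
qed

lemma measure_light_windows_le_entropy:
  assumes "0 < d"
  shows "measure M {x. measure M (window_cylinder n (window n x)) \<le> d} * - ln d
           \<le> block_entropy M (2 * n)"
proof -
  define Q where "Q = {q :: bool list. length q = Suc (2 * n)}"
  define L where "L = {q \<in> Q. marginal M (2 * n) q \<le> d}"
  have "finite Q"
    unfolding Q_def using finite_lists_length_eq[of "UNIV :: bool set"] by simp
  have "measure M (window_cylinder n (window n x)) = marginal M (2 * n) (window n x)" for x
    by (simp add: measure_window_cylinder)
  then have "{x. measure M (window_cylinder n (window n x)) \<le> d} = (\<Union>q\<in>L. window_cylinder n q)"
    by (auto simp: L_def Q_def window_cylinder_def)
  also have "measure M \<dots> = (\<Sum>q\<in>L. measure M (window_cylinder n q))"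
    using \<open>finite Q\<close> sets_window_cylinder sets_eq
    by (intro finite_measure_finite_Union) (auto simp: L_def disjoint_family_on_def window_cylinder_def)
  also have "\<dots> = (\<Sum>q\<in>L. marginal M (2 * n) q)"
    by (intro sum.cong refl measure_window_cylinder) (simp add: L_def Q_def)
  finally show ?thesis
    using light_mass_le_entropy[OF \<open>finite Q\<close>, of "marginal M (2 * n)" d] assms
    by (simp add: L_def Q_def block_entropy_def marginal_def)
qed

lemma finite_heavy_windows:
  assumes "0 < d"
  shows "finite (\<Inter>n. {x. d < measure M (window_cylinder n (window n x))})" (is "finite ?A")
proof (rule ccontr)
  assume "infinite ?A"
  obtain N :: nat where N: "1 < real N * d"
    using ex_less_of_nat_mult assms by blast
  obtain F where F: "finite F" "card F = N" "F \<subseteq> ?A"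
    using infinite_arbitrarily_large[OF \<open>infinite ?A\<close>] by blast
  obtain n where inj: "inj_on (window n) F"
    using eventually_inj_on_window[OF F(1)] by (auto simp: eventually_sequentially)
  have heavy: "d \<le> measure M (window_cylinder n (window n x))" if "x \<in> F" for x
    using that F(3) by (blast intro: less_imp_le)
  have "real (card (window n ` F)) * d \<le> 1"
  proof (rule card_mult_le_one_if_disjoint)
    show "disjoint_family_on (window_cylinder n) (window n ` F)"
      by (auto simp: disjoint_family_on_def window_cylinder_def)
    show "window_cylinder n ` window n ` F \<subseteq> sets M"
      using sets_window_cylinder sets_eq by auto
  qed (use F(1) heavy in auto)
  then show False
    using N F(2) card_image[OF inj] by simp
qed

lemma measure_periodic_lower_bound:
  assumes K: "\<And>j. block_entropy M j \<le> K" and "0 < t"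
  shows "1 - K / t \<le> measure M {x. periodic_config x}"
proof -
  define heavy where "heavy n = {x. exp (- t) < measure M (window_cylinder n (window n x))}" for n
  have sets_heavy: "heavy n \<in> sets M" for n
    using vimage_window_sets[of n "{q. exp (- t) < measure M (window_cylinder n q)}"] sets_eq
    by (simp add: heavy_def vimage_def)
  have "decseq heavy"
  proof (rule decseq_SucI, rule subsetI)
    fix n x assume "x \<in> heavy (Suc n)"
    moreover have "measure M (window_cylinder (Suc n) (window (Suc n) x))
                     \<le> measure M (window_cylinder n (window n x))"
      using window_cylinder_Suc_subset sets_window_cylinder sets_eq
      by (intro finite_measure_mono) auto
    ultimately show "x \<in> heavy n"
      by (simp add: heavy_def)
  qed
  have "1 - K / t \<le> measure M (heavy n)" for n
  proof -
    have "space M - heavy n = {x. measure M (window_cylinder n (window n x)) \<le> exp (- t)}"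
      by (auto simp: heavy_def space_eq)
    then have "measure M (space M - heavy n) * t \<le> K"
      using measure_light_windows_le_entropy[of "exp (- t)" n] K[of "2 * n"] by simp
    then show ?thesis
      using prob_compl[OF sets_heavy] \<open>0 < t\<close> by (simp add: field_simps)
  qed
  moreover have "(\<lambda>n. measure M (heavy n)) \<longlonglongrightarrow> measure M (\<Inter>n. heavy n)"
    using sets_heavy \<open>decseq heavy\<close> by (intro finite_Lim_measure_decseq) auto
  ultimately have "1 - K / t \<le> measure M (\<Inter>n. heavy n)"
    by (simp add: LIMSEQ_le_const)
  also have "\<dots> \<le> measure M {x. periodic_config x}"
    using finite_heavy_windows[of "exp (- t)"]
    by (intro finite_measure_le_periodic) (simp add: heavy_def)
  finally show ?thesis .
qed

end

theorem lemma5p1: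
  fixes M :: "(int \<Rightarrow> bool) measure"
  assumes "prob_space M"
    and "sets M = sets config_space"
    and "distr M M shift = M"
    and "convergent (block_entropy M)"
  shows "{x \<in> space M. periodic_config x} \<in> sets M
         \<and> measure M {x \<in> space M. periodic_config x} = 1"
proof -
  interpret shift_invariant M
    using assms(1-3) by (simp add: shift_invariant_def shift_invariant_axioms_def)
  obtain K where K: "\<And>j. block_entropy M j \<le> K"
    using Bseq_bdd_above[OF convergent_imp_Bseq[OF assms(4)]] by (auto simp: bdd_above_def)
  let ?P = "{x. periodic_config x}"
  have "(\<lambda>n. 1 - K / real n) \<longlonglongrightarrow> 1"
    using tendsto_diff[OF tendsto_const[of 1] lim_const_over_n[of K]] by simp
  moreover have "\<exists>N. \<forall>n\<ge>N. 1 - K / real n \<le> measure M ?P"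
    using measure_periodic_lower_bound[OF K] by (intro exI[of _ 1]) simp
  ultimately have "1 \<le> measure M ?P"
    by (rule LIMSEQ_le_const2)
  then have "measure M ?P = 1"
    using prob_le_1[of ?P] by linarith
  then show ?thesis
    using sets_periodic_config sets_eq by (simp add: space_eq)
qed

end
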